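(* Let $C \subset \mathbb{S}^{47}$ be a spherical $11$-design whose set of inner products $I(C)=\{\langle x,y\rangle : x,y\in C,\ x\neq y\}$ satisfies $I(C) \subset [-1,1)\setminus F$, where $F=\left(-\tfrac13,-\tfrac16\right)\cup\left(\tfrac16,\tfrac13\right)$. Then $|C| \geq 52\,416\,000$. If equality holds, then $C$ is distance invariant and its distance distribution is \[ A_{-1}=1,\quad A_{1/2}=A_{-1/2}=36\,848,\quad A_{1/3}=A_{-1/3}=1\,678\,887,\quad A_{1/6}=A_{-1/6}=12\,608\,784,\quad A_0=23\,766\,960 \] (with $A_t=0$ for all other $t$).
   Context: A spherical $\tau$-design is a finite set $C\subset\mathbb{S}^{n-1}$ such that $\int_{\mathbb{S}^{n-1}} p\, d\sigma_n = \frac{1}{|C|}\sum_{x\in C} p(x)$ for every polynomial $p$ in $n$ variables of degree at most $\tau$, where $\sigma_n$ is the normalized surface measure. For $x\in C$ and $t\in[-1,1)$, $A_t(x)=|\{y\in C: \langle x,y\rangle = t\}|$; $C$ is distance invariant if $A_t(x)$ does not depend on $x\in C$ for every $t$, and then one writes $A_t$. *)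

theory Defs
  imports "HOL-Analysis.Analysis"
begin

definition unit_sphere :: "(real ^ 'n) set" where
  "unit_sphere = {x. norm x = 1}"

text \<open>Normalized surface measure on the unit sphere, realised as the cone measure:
  the image of the uniform probability measure on the unit ball under radial projection
  x |-> x / |x|.  This is the rotation invariant probability measure on the sphere.\<close>
definition sphere_measure :: "(real ^ 'n) measure" where
  "sphere_measure = distr (uniform_measure lborel (ball 0 1)) borel (\<lambda>x. x /\<^sub>R norm x)"

definition poly_fun_deg_le :: "nat \<Rightarrow> (real ^ 'n \<Rightarrow> real) \<Rightarrow> bool" where
  "poly_fun_deg_le d p \<longleftrightarrow>
     (\<exists>(M :: ('n \<Rightarrow> nat) set) (c :: ('n \<Rightarrow> nat) \<Rightarrow> real).
        finite M \<and> (\<forall>a\<in>M. (\<Sum>i\<in>UNIV. a i) \<le> d) \<and>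
        (\<forall>x. p x = (\<Sum>a\<in>M. c a * (\<Prod>i\<in>UNIV. (x $ i) ^ a i))))"

definition spherical_design :: "nat \<Rightarrow> (real ^ 'n) set \<Rightarrow> bool" where
  "spherical_design \<tau> C \<longleftrightarrow>
     finite C \<and> C \<noteq> {} \<and> C \<subseteq> unit_sphere \<and>
     (\<forall>p. poly_fun_deg_le \<tau> p \<longrightarrow>
        integral\<^sup>L sphere_measure p = (\<Sum>x\<in>C. p x) / real (card C))"

definition inner_products :: "(real ^ 'n) set \<Rightarrow> real set" where
  "inner_products C = {x \<bullet> y | x y. x \<in> C \<and> y \<in> C \<and> x \<noteq> y}"

definition dist_count :: "(real ^ 'n) set \<Rightarrow> real ^ 'n \<Rightarrow> real \<Rightarrow> nat" where
  "dist_count C x t = card {y \<in> C. x \<bullet> y = t}"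

definition distance_invariant :: "(real ^ 'n) set \<Rightarrow> bool" where
  "distance_invariant C \<longleftrightarrow>
     (\<forall>t. -1 \<le> t \<and> t < 1 \<longrightarrow> (\<forall>x\<in>C. \<forall>y\<in>C. dist_count C x t = dist_count C y t))"

end

(*
  Delsarte's linear programming method.  For a spherical 11-design C, a point x of C and a
  real polynomial f of degree at most 11, the average of f(<x,y>) over y in C equals the
  integral of f(<x,y>) over the sphere.  By rotation invariance this integral depends only on
  the moments m_k of a single coordinate, which satisfy m_(k+2) = m_k (k+1)/(k+n).
  The polynomial f(t) = (t+1) t^2 (t^2-1/4)^2 (t^2-1/9) (t^2-1/36) is nonnegative at every
  admissible inner product, f(1) = 35/36, and its spherical mean is 1/53913600; hence
  |C| >= 35/36 * 53913600 = 52416000.  If equality holds, f vanishes at all inner products,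
  so they lie among the eight roots of f, and the design identity applied to the Lagrange
  basis polynomials of these roots determines every A_t.
*)

theory Submission
  imports Defs "HOL-Probability.Probability_Measure" "HOL-Computational_Algebra.Polynomial"
begin

section \<open>Invariance of Lebesgue measure under orthogonal maps\<close>

definition orthogonally_invariant :: "'a::real_inner measure \<Rightarrow> bool" where
  "orthogonally_invariant M \<longleftrightarrow> (\<forall>Q. orthogonal_transformation Q \<longrightarrow> distr M borel Q = M)"

lemma borel_measurable_orthogonal_transformation:
  fixes Q :: "'a::real_inner \<Rightarrow> 'b::real_inner"
  assumes "orthogonal_transformation Q"
  shows "Q \<in> borel_measurable borel"
proof -
  have "bounded_linear Q"
    using assms orthogonal_transformation_linear[OF assms]
    by (intro bounded_linear_intro[where K=1]) (simp_all add: linear_add linear_scale orthogonal_transformation_norm)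
  then show ?thesis
    by (intro borel_measurable_continuous_onI linear_continuous_on)
qed

lemma emeasure_lborel_eq_measure_lebesgue:
  fixes A :: "'a::euclidean_space set"
  assumes "A \<in> sets borel" "A \<in> lmeasurable"
  shows "emeasure lborel A = measure lebesgue A"
proof -
  have "emeasure lebesgue A = emeasure lborel A"
    using assms(1) by (simp add: emeasure_completion)
  then show ?thesis
    using assms(2) by (simp add: emeasure_eq_measure2)
qed

lemma lborel_distr_orthogonal_wellorder:
  fixes Q :: "(real, 'n::{finite,wellorder}) vec \<Rightarrow> (real, 'n) vec"
  assumes Q: "orthogonal_transformation Q"
  shows "distr lborel borel Q = lborel"
proof (rule lborel_eqI[symmetric])
  fix l u :: "(real, 'n) vec"
  assume le: "\<And>b. b \<in> Basis \<Longrightarrow> l \<bullet> b \<le> u \<bullet> b"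
  have Q': "orthogonal_transformation (inv Q)"
    using Q by (rule orthogonal_transformation_inv)
  have pre: "Q -` box l u = inv Q ` box l u"
    using orthogonal_transformation_bij[OF Q] by (simp add: bij_vimage_eq_inv_image)
  have "emeasure (distr lborel borel Q) (box l u) = emeasure lborel (Q -` box l u)"
    using borel_measurable_orthogonal_transformation[OF Q] by (simp add: emeasure_distr)
  also have "\<dots> = measure lebesgue (inv Q ` box l u)"
  proof -
    have "Q -` box l u \<in> sets borel"
      by (intro measurable_sets_borel[OF borel_measurable_orthogonal_transformation[OF Q]]) simp
    then show ?thesis
      unfolding pre
      by (intro emeasure_lborel_eq_measure_lebesgue measurable_orthogonal_image[OF Q'] lmeasurable_box)
        (simp add: pre[symmetric])
  qed
  also have "\<dots> = measure lebesgue (box l u)"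
    by (simp add: measure_orthogonal_image[OF Q' lmeasurable_box])
  also have "\<dots> = emeasure lborel (box l u)"
    by (rule emeasure_lborel_eq_measure_lebesgue[symmetric]) auto
  finally show "emeasure (distr lborel borel Q) (box l u) = (\<Prod>b\<in>Basis. (u - l) \<bullet> b)"
    using le by simp
qed simp

lemma orthogonal_transformation_vec_permute:
  fixes g :: "'m::finite \<Rightarrow> 'n::finite"
  assumes "bij g"
  shows "orthogonal_transformation (\<lambda>x::real^'n. (\<chi> j. x $ g j) :: real^'m)"
  unfolding orthogonal_transformation_def
proof (intro conjI allI)
  show "linear (\<lambda>x::real^'n. (\<chi> j. x $ g j) :: real^'m)"
    by (auto intro!: linearI simp: vec_eq_iff)
  fix v w :: "real^'n"
  show "(\<chi> j. v $ g j) \<bullet> ((\<chi> j. w $ g j) :: real^'m) = v \<bullet> w"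
    using sum.reindex_bij_betw[OF assms, of "\<lambda>i. v $ i * w $ i"] by (simp add: inner_vec_def)
qed

lemma Basis_real_vec: "(Basis :: (real^'n) set) = range (\<lambda>i. axis i 1)"
  by (auto simp: Basis_vec_def)

lemma prod_Basis_vec:
  "(\<Prod>b\<in>(Basis :: (real^'n) set). f b) = (\<Prod>i\<in>UNIV. f (axis i 1))"
proof -
  have "inj (\<lambda>i::'n. axis i (1::real))"
    by (auto simp: inj_def axis_eq_axis)
  then show ?thesis
    by (simp add: Basis_real_vec prod.reindex)
qed

lemma emeasure_lborel_box_cart:
  fixes l u :: "real^'n"
  assumes "\<And>i. l $ i \<le> u $ i"
  shows "emeasure lborel (box l u) = (\<Prod>i\<in>UNIV. u $ i - l $ i)"
proof -
  have "b \<in> Basis \<Longrightarrow> l \<bullet> b \<le> u \<bullet> b" for b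
    using assms by (auto simp: Basis_real_vec inner_axis)
  then show ?thesis
    by (simp add: prod_Basis_vec inner_axis)
qed

lemma lborel_distr_vec_permute:
  fixes g :: "'m::finite \<Rightarrow> 'n::finite"
  assumes g: "bij g"
  shows "distr lborel borel (\<lambda>x::real^'n. (\<chi> j. x $ g j) :: real^'m) = lborel"
proof (rule lborel_eqI[symmetric])
  let ?P = "\<lambda>x::real^'n. (\<chi> j. x $ g j) :: real^'m"
  let ?R = "\<lambda>z::real^'m. (\<chi> i. z $ inv g i) :: real^'n"
  fix l u :: "real^'m"
  assume lu: "\<And>b. b \<in> Basis \<Longrightarrow> l \<bullet> b \<le> u \<bullet> b"
  have le: "l $ j \<le> u $ j" for j
    using lu[of "axis j 1"] by (simp add: Basis_real_vec inner_axis)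
  have g_inv: "g (inv g i) = i" and inv_g: "inv g (g j) = j" for i j
    using g by (simp_all add: bij_is_surj surj_f_inv_f bij_is_inj)
  have "?P -` box l u = box (?R l) (?R u)"
    by (auto simp: mem_box_cart) (metis g_inv inv_g)+
  then have "emeasure (distr lborel borel ?P) (box l u) = emeasure lborel (box (?R l) (?R u))"
    using borel_measurable_orthogonal_transformation[OF orthogonal_transformation_vec_permute[OF g]]
    by (simp add: emeasure_distr)
  also have "\<dots> = (\<Prod>i\<in>UNIV. u $ inv g i - l $ inv g i)"
    using le by (simp add: emeasure_lborel_box_cart)
  also have "\<dots> = (\<Prod>j\<in>UNIV. u $ j - l $ j)"
    using prod.reindex_bij_betw[OF bij_imp_bij_inv[OF g], of "\<lambda>j. u $ j - l $ j"] by simp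
  also have "\<dots> = emeasure lborel (box l u)"
    using le by (simp add: emeasure_lborel_box_cart)
  finally show "emeasure (distr lborel borel ?P) (box l u) = (\<Prod>b\<in>Basis. (u - l) \<bullet> b)"
    using emeasure_lborel_box[OF lu] by simp
qed simp

text \<open>The library computes the measure of orthogonal images (\<open>measure_orthogonal_image\<close>)
  only for index types of sort \<open>wellorder\<close>; the invariance is transported to an arbitrary
  finite index type of the same cardinality along a permutation of coordinates.\<close>
lemma lborel_distr_orthogonal:
  fixes Q :: "real^'n \<Rightarrow> real^'n"
  assumes card: "CARD('m::{finite,wellorder}) = CARD('n)" and Q: "orthogonal_transformation Q"
  shows "distr lborel borel Q = lborel"
proof -
  obtain g :: "'m \<Rightarrow> 'n" where g: "bij g"
    using card finite_same_card_bij[of "UNIV :: 'm set" "UNIV :: 'n set"] by auto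
  define P :: "real^'n \<Rightarrow> (real, 'm) vec" where "P x = (\<chi> j. x $ g j)" for x
  define R :: "(real, 'm) vec \<Rightarrow> real^'n" where "R z = (\<chi> i. z $ inv g i)" for z
  have P: "orthogonal_transformation P" and R: "orthogonal_transformation R"
    unfolding P_def[abs_def] R_def[abs_def]
    by (intro orthogonal_transformation_vec_permute g bij_imp_bij_inv)+
  have lborel_R: "distr lborel borel R = lborel"
    unfolding R_def[abs_def] by (intro lborel_distr_vec_permute bij_imp_bij_inv g)
  define Q' where "Q' = P \<circ> Q \<circ> R"
  have Q': "orthogonal_transformation Q'"
    unfolding Q'_def by (intro orthogonal_transformation_compose P Q R)
  have "R (P x) = x" for x
    using g by (simp add: P_def R_def vec_eq_iff bij_is_surj surj_f_inv_f)
  then have RQ': "Q \<circ> R = R \<circ> Q'"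
    by (auto simp: Q'_def)
  note meas = borel_measurable_orthogonal_transformation
  have "distr lborel borel Q = distr (distr lborel borel R) borel Q"
    by (simp add: lborel_R)
  also have "\<dots> = distr lborel borel (R \<circ> Q')"
    using meas[OF Q] meas[OF R] by (simp add: distr_distr RQ')
  also have "\<dots> = distr (distr lborel borel Q') borel R"
    using meas[OF Q'] meas[OF R] by (simp add: distr_distr)
  also have "\<dots> = lborel"
    using lborel_distr_orthogonal_wellorder[OF Q'] lborel_R by simp
  finally show ?thesis .
qed

lemma orthogonally_invariant_lborel:
  assumes "CARD('m::{finite,wellorder}) = CARD('n)"
  shows "orthogonally_invariant (lborel :: (real^'n) measure)"
  using lborel_distr_orthogonal[OF assms] by (simp add: orthogonally_invariant_def)

section \<open>The normalized measure on the sphere\<close>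

lemma orthogonally_invariant_uniform_ball:
  assumes inv: "orthogonally_invariant (lborel :: 'a::euclidean_space measure)"
  shows "orthogonally_invariant (uniform_measure lborel (ball (0::'a) r))"
  unfolding orthogonally_invariant_def
proof (intro allI impI measure_eqI)
  fix Q :: "'a \<Rightarrow> 'a" and A
  assume Q: "orthogonal_transformation Q" and "A \<in> sets (distr (uniform_measure lborel (ball 0 r)) borel Q)"
  then have A: "A \<in> sets borel"
    by simp
  have mQ: "Q \<in> borel_measurable borel"
    by (rule borel_measurable_orthogonal_transformation[OF Q])
  have "ball 0 r \<inter> Q -` A = Q -` (ball 0 r \<inter> A)"
    by (auto simp: orthogonal_transformation_norm[OF Q])
  then have "emeasure lborel (ball 0 r \<inter> Q -` A) = emeasure (distr lborel borel Q) (ball 0 r \<inter> A)"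
    using mQ A by (simp add: emeasure_distr)
  also have "\<dots> = emeasure lborel (ball 0 r \<inter> A)"
    using inv Q by (simp add: orthogonally_invariant_def)
  finally show "emeasure (distr (uniform_measure lborel (ball 0 r)) borel Q) A
      = emeasure (uniform_measure lborel (ball 0 r)) A"
    using A mQ by (simp add: emeasure_distr measurable_sets_borel)
qed simp

lemma prob_space_sphere_measure: "prob_space (sphere_measure :: (real^'n) measure)"
proof -
  have "emeasure lborel (ball (0::real^'n) 1) \<noteq> 0"
    using unit_ball_vol_pos[of "real CARD('n)"] by (simp add: emeasure_ball less_imp_neq[symmetric])
  then have "prob_space (uniform_measure lborel (ball (0::real^'n) 1))"
    using emeasure_lborel_ball_finite[of "0::real^'n" 1] by (intro prob_space_uniform_measure) auto
  then show ?thesis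
    unfolding sphere_measure_def by (rule prob_space.prob_space_distr) measurable
qed

lemma sets_sphere_measure [simp, measurable_cong]:
  "sets (sphere_measure :: (real^'n) measure) = sets borel"
  by (simp add: sphere_measure_def)

lemma AE_sphere_measure_norm: "AE y in (sphere_measure :: (real^'n) measure). norm y = 1"
  unfolding sphere_measure_def
proof (subst AE_distr_iff)
  show "AE x in uniform_measure lborel (ball 0 1). norm (x /\<^sub>R norm x :: real^'n) = 1"
    using AE_lborel_singleton[of "0::real^'n"] by (intro AE_uniform_measureI) auto
qed measurable

lemma orthogonally_invariant_sphere_measure:
  assumes "orthogonally_invariant (lborel :: (real^'n) measure)"
  shows "orthogonally_invariant (sphere_measure :: (real^'n) measure)"
  unfolding orthogonally_invariant_def
proof (intro allI impI)
  fix Q :: "real^'n \<Rightarrow> real^'n"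
  assume Q: "orthogonal_transformation Q"
  let ?U = "uniform_measure lborel (ball (0::real^'n) 1)"
  let ?proj = "\<lambda>x::real^'n. x /\<^sub>R norm x"
  have mQ: "Q \<in> borel_measurable borel"
    by (rule borel_measurable_orthogonal_transformation[OF Q])
  have "Q \<circ> ?proj = ?proj \<circ> Q"
    by (auto simp: orthogonal_transformation_norm[OF Q] orthogonal_transformation_scaleR[OF Q])
  then have "distr sphere_measure borel Q = distr (distr ?U borel Q) borel ?proj"
    unfolding sphere_measure_def using mQ by (simp add: distr_distr)
  also have "distr ?U borel Q = ?U"
    using orthogonally_invariant_uniform_ball[OF assms] Q by (simp add: orthogonally_invariant_def)
  finally show "distr sphere_measure borel Q = sphere_measure"
    by (simp add: sphere_measure_def)
qed

section \<open>Moments of the sphere measure\<close>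

lemma integral_sphere_measure_orthogonal:
  fixes h :: "real^'n \<Rightarrow> real" and Q :: "real^'n \<Rightarrow> real^'n"
  assumes inv: "orthogonally_invariant (sphere_measure :: (real^'n) measure)"
    and Q: "orthogonal_transformation Q" and h: "h \<in> borel_measurable borel"
  shows "(\<integral>y. h (Q y) \<partial>sphere_measure) = (\<integral>y. h y \<partial>sphere_measure)"
proof -
  have "(\<integral>y. h (Q y) \<partial>sphere_measure) = (\<integral>y. h y \<partial>distr sphere_measure borel Q)"
    using h borel_measurable_orthogonal_transformation[OF Q] by (simp add: integral_distr)
  also have "distr sphere_measure borel Q = sphere_measure"
    using inv Q unfolding orthogonally_invariant_def by blast
  finally show ?thesis .
qed

lemma integrable_sphere_measure_bounded:
  fixes h :: "real^'n \<Rightarrow> real"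
  assumes "h \<in> borel_measurable borel" and "\<And>y. norm y = 1 \<Longrightarrow> \<bar>h y\<bar> \<le> B"
  shows "integrable sphere_measure h"
proof -
  interpret prob_space "sphere_measure :: (real^'n) measure"
    by (rule prob_space_sphere_measure)
  show ?thesis
    using AE_sphere_measure_norm assms
    by (intro integrable_const_bound[where B=B]) (auto elim: AE_mp)
qed

lemma integrable_sphere_inner_power_mult:
  fixes u w :: "real^'n"
  shows "integrable sphere_measure (\<lambda>y. (u \<bullet> y) ^ a * (w \<bullet> y) ^ b)"
proof (rule integrable_sphere_measure_bounded[where B = "norm u ^ a * norm w ^ b"])
  fix y :: "real^'n"
  assume "norm y = 1"
  then have "\<bar>u \<bullet> y\<bar> \<le> norm u" and "\<bar>w \<bullet> y\<bar> \<le> norm w"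
    using Cauchy_Schwarz_ineq2[of u y] Cauchy_Schwarz_ineq2[of w y] by auto
  then show "\<bar>(u \<bullet> y) ^ a * (w \<bullet> y) ^ b\<bar> \<le> norm u ^ a * norm w ^ b"
    by (simp add: abs_mult power_abs mult_mono power_mono)
qed measurable

definition householder :: "'a::real_inner \<Rightarrow> 'a \<Rightarrow> 'a" where
  "householder v y = y - (2 * (v \<bullet> y) / (v \<bullet> v)) *\<^sub>R v"

lemma orthogonal_transformation_householder: "orthogonal_transformation (householder v)"
  unfolding orthogonal_transformation_def
proof (intro conjI allI)
  show "linear (householder v)"
    by (rule linearI) (simp_all add: householder_def inner_add_right add_divide_distrib
        scaleR_add_left algebra_simps)
  fix a b
  show "householder v a \<bullet> householder v b = a \<bullet> b"
  proof (cases "v = 0")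
    case False
    then have "v \<bullet> v \<noteq> 0"
      by simp
    then show ?thesis
      by (simp add: householder_def inner_diff_left inner_diff_right inner_commute field_simps)
  qed (simp add: householder_def)
qed

lemma inner_householder: "u \<bullet> householder v y = householder v u \<bullet> y"
  by (simp add: householder_def inner_diff_left inner_diff_right inner_commute)

lemma householder_diff:
  assumes "norm u = norm e"
  shows "householder (u - e) u = e"
proof (cases "u = e")
  case False
  have "u \<bullet> u = e \<bullet> e"
    using assms by (simp add: dot_square_norm)
  then have "(u - e) \<bullet> (u - e) = 2 * ((u - e) \<bullet> u)"
    by (simp add: inner_diff_left inner_diff_right inner_commute algebra_simps)
  moreover have "(u - e) \<bullet> (u - e) \<noteq> 0"
    using False by simp
  ultimately show ?thesis
    by (simp add: householder_def)
qed (simp add: householder_def)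

lemma integral_sphere_inner_eq:
  fixes u e :: "real^'n" and g :: "real \<Rightarrow> real"
  assumes inv: "orthogonally_invariant (sphere_measure :: (real^'n) measure)"
    and "norm u = norm e" and "g \<in> borel_measurable borel"
  shows "(\<integral>y. g (u \<bullet> y) \<partial>sphere_measure) = (\<integral>y. g (e \<bullet> y) \<partial>sphere_measure)"
proof -
  have "(\<integral>y. g (u \<bullet> y) \<partial>sphere_measure) = (\<integral>y. g (u \<bullet> householder (u - e) y) \<partial>sphere_measure)"
    using assms by (intro integral_sphere_measure_orthogonal[symmetric] orthogonal_transformation_householder) auto
  then show ?thesis
    by (simp add: inner_householder householder_diff[OF assms(2)])
qed

lemma integral_sphere_inner_power_odd:
  fixes u :: "real^'n"
  assumes inv: "orthogonally_invariant (sphere_measure :: (real^'n) measure)" and "odd k"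
  shows "(\<integral>y. (u \<bullet> y) ^ k \<partial>sphere_measure) = 0"
proof -
  have "orthogonal_transformation (\<lambda>y::real^'n. - y)"
    by (simp add: orthogonal_transformation_neg)
  then have "(\<integral>y. (u \<bullet> y) ^ k \<partial>sphere_measure) = (\<integral>y. (u \<bullet> - y) ^ k \<partial>sphere_measure)"
    using inv by (intro integral_sphere_measure_orthogonal[symmetric]) auto
  also have "\<dots> = - (\<integral>y. (u \<bullet> y) ^ k \<partial>sphere_measure)"
    using \<open>odd k\<close> by (simp add: power_minus_odd)
  finally show ?thesis
    by simp
qed

lemma integral_sphere_inner_power_scale:
  fixes w e :: "real^'n"
  assumes inv: "orthogonally_invariant (sphere_measure :: (real^'n) measure)"
    and e: "norm e = 1" and w: "w \<noteq> 0"
  shows "(\<integral>y. (w \<bullet> y) ^ k \<partial>sphere_measure) = norm w ^ k * (\<integral>y. (e \<bullet> y) ^ k \<partial>sphere_measure)"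
proof -
  let ?u = "w /\<^sub>R norm w"
  have "w \<bullet> y = norm w * (?u \<bullet> y)" for y
    using w by simp
  then have "(\<integral>y. (w \<bullet> y) ^ k \<partial>sphere_measure) = (\<integral>y. norm w ^ k * (?u \<bullet> y) ^ k \<partial>sphere_measure)"
    by (metis power_mult_distrib)
  also have "\<dots> = norm w ^ k * (\<integral>y. (?u \<bullet> y) ^ k \<partial>sphere_measure)"
    by simp
  also have "(\<integral>y. (?u \<bullet> y) ^ k \<partial>sphere_measure) = (\<integral>y. (e \<bullet> y) ^ k \<partial>sphere_measure)"
    using e w by (intro integral_sphere_inner_eq[OF inv]) auto
  finally show ?thesis .
qed

lemma integral_sphere_pencil_binomial:
  fixes e f :: "real^'n"
  shows "(\<integral>y. (e \<bullet> y + s * (f \<bullet> y)) ^ N \<partial>sphere_measure)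
       = (\<Sum>k\<le>N. (of_nat (N choose k) * (\<integral>y. (f \<bullet> y) ^ k * (e \<bullet> y) ^ (N - k) \<partial>sphere_measure)) * s ^ k)"
proof -
  have "(e \<bullet> y + s * (f \<bullet> y)) ^ N
      = (\<Sum>k\<le>N. (of_nat (N choose k) * s ^ k) * ((f \<bullet> y) ^ k * (e \<bullet> y) ^ (N - k)))" for y
    by (subst add.commute, subst binomial_ring) (simp add: power_mult_distrib mult_ac)
  then have "(\<integral>y. (e \<bullet> y + s * (f \<bullet> y)) ^ N \<partial>sphere_measure)
      = (\<Sum>k\<le>N. of_nat (N choose k) * s ^ k * (\<integral>y. (f \<bullet> y) ^ k * (e \<bullet> y) ^ (N - k) \<partial>sphere_measure))"
    by (simp add: integral_sum integrable_sphere_inner_power_mult del: of_nat_sum)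
  then show ?thesis
    by (simp add: mult_ac)
qed

lemma sum_even_power_coeffs:
  fixes c :: "nat \<Rightarrow> real"
  shows "(\<Sum>k\<le>2*m. (if even k then c (k div 2) else 0) * s ^ k) = (\<Sum>i\<le>m. c i * (s\<^sup>2) ^ i)"
proof (induction m)
  case (Suc m)
  have "2 * Suc m = Suc (Suc (2 * m))"
    by simp
  then show ?case
    using Suc.IH by (simp add: power_mult power2_eq_square)
qed simp

text \<open>Compare the coefficients of \<open>s\<^sup>2\<close> in the binomial expansion of the integral of
  \<open>(e \<bullet> y + s * (f \<bullet> y)) ^ (2*j + 2)\<close> and in its value
  \<open>(1 + s\<^sup>2) ^ (j + 1)\<close> times the integral of \<open>(e \<bullet> y) ^ (2*j + 2)\<close>, given by rotation invariance.\<close>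
lemma integral_sphere_mixed_moment:
  fixes e f :: "real^'n"
  assumes inv: "orthogonally_invariant (sphere_measure :: (real^'n) measure)"
    and e: "norm e = 1" and f: "norm f = 1" and ef: "e \<bullet> f = 0"
  shows "(\<integral>y. (f \<bullet> y)\<^sup>2 * (e \<bullet> y) ^ (2*j) \<partial>sphere_measure)
       = (\<integral>y. (e \<bullet> y) ^ (2*j + 2) \<partial>sphere_measure) / (2 * real j + 1)"
proof -
  define N where "N = 2 * Suc j"
  define M where "M = (\<integral>y. (e \<bullet> y) ^ N \<partial>sphere_measure)"
  define A where "A k = of_nat (N choose k) * (\<integral>y. (f \<bullet> y) ^ k * (e \<bullet> y) ^ (N - k) \<partial>sphere_measure)" for k
  define D where "D k = (if even k then of_nat (Suc j choose (k div 2)) * M else 0)" for k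
  have "(\<Sum>k\<le>N. A k * s ^ k) = (\<Sum>k\<le>N. D k * s ^ k)" for s :: real
  proof -
    have "e \<bullet> e = 1" "f \<bullet> f = 1"
      using e f by (simp_all add: dot_square_norm)
    then have w: "norm (e + s *\<^sub>R f) ^ 2 = 1 + s\<^sup>2"
      unfolding power2_norm_eq_inner using ef by (simp add: inner_add_left inner_add_right inner_commute power2_eq_square)
    then have "e + s *\<^sub>R f \<noteq> 0"
      by (metis add_pos_nonneg norm_zero power_zero_numeral zero_le_power2 zero_less_one order_less_irrefl)
    then have "(\<Sum>k\<le>N. A k * s ^ k) = norm (e + s *\<^sub>R f) ^ N * M"
      using integral_sphere_inner_power_scale[OF inv e, of "e + s *\<^sub>R f" N]
      by (simp add: A_def M_def integral_sphere_pencil_binomial[symmetric] inner_add_left)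
    also have "norm (e + s *\<^sub>R f) ^ N = (s\<^sup>2 + 1) ^ Suc j"
      by (simp only: N_def power_mult w add.commute)
    also have "(s\<^sup>2 + 1) ^ Suc j * M = (\<Sum>i\<le>Suc j. (of_nat (Suc j choose i) * M) * (s\<^sup>2) ^ i)"
      unfolding binomial_ring by (simp add: sum_distrib_left sum_distrib_right distrib_left mult_ac)
    also have "\<dots> = (\<Sum>k\<le>N. D k * s ^ k)"
      using sum_even_power_coeffs[where c="\<lambda>i. of_nat (Suc j choose i) * M" and m="Suc j" and s=s]
      by (simp add: D_def N_def)
    finally show ?thesis .
  qed
  then have "A 2 = D 2"
    using polyfun_eq_coeffs[where c=A and d=D and n=N] by (simp add: N_def)
  moreover have "N choose 2 = Suc j * (2 * j + 1)"
    by (simp add: N_def choose_two)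
  ultimately have "real (Suc j) * ((2 * real j + 1) * (\<integral>y. (f \<bullet> y)\<^sup>2 * (e \<bullet> y) ^ (2*j) \<partial>sphere_measure))
      = real (Suc j) * M"
    by (simp add: A_def D_def N_def algebra_simps)
  then have "(2 * real j + 1) * (\<integral>y. (f \<bullet> y)\<^sup>2 * (e \<bullet> y) ^ (2*j) \<partial>sphere_measure) = M"
    by (simp only: mult_cancel_left of_nat_eq_0_iff nat.distinct simp_thms)
  then show ?thesis
    by (simp add: M_def N_def field_simps)
qed

lemma sum_inner_axis_square: "(\<Sum>i\<in>UNIV. (axis i 1 \<bullet> y)\<^sup>2) = (norm y)\<^sup>2" for y :: "real^'n"
  unfolding inner_axis' power2_norm_eq_inner by (simp add: inner_vec_def power2_eq_square)

lemma integral_sphere_axis_power_step: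
  fixes i0 :: "'n::finite"
  assumes inv: "orthogonally_invariant (sphere_measure :: (real^'n) measure)"
  shows "(\<integral>y. (axis i0 1 \<bullet> y) ^ (2*j) \<partial>(sphere_measure :: (real^'n) measure))
       = (\<integral>y. (axis i0 1 \<bullet> y) ^ (2*j + 2) \<partial>sphere_measure) * (2 * real j + CARD('n)) / (2 * real j + 1)"
proof -
  define e :: "real^'n" where "e = axis i0 1"
  define M where "M = (\<integral>y. (e \<bullet> y) ^ (2*j + 2) \<partial>sphere_measure)"
  let ?I = "\<lambda>i. (\<integral>y. (axis i 1 \<bullet> y)\<^sup>2 * (e \<bullet> y) ^ (2*j) \<partial>sphere_measure)"
  have "(\<integral>y. (e \<bullet> y) ^ (2*j) \<partial>sphere_measure)
      = (\<integral>y. (\<Sum>i\<in>UNIV. (axis i 1 \<bullet> y)\<^sup>2 * (e \<bullet> y) ^ (2*j)) \<partial>sphere_measure)"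
    using AE_sphere_measure_norm
    by (intro integral_cong_AE) (auto simp: sum_distrib_right[symmetric] sum_inner_axis_square elim: AE_mp)
  also have "\<dots> = (\<Sum>i\<in>UNIV. ?I i)"
    by (simp add: integral_sum integrable_sphere_inner_power_mult)
  also have "\<dots> = ?I i0 + (\<Sum>i\<in>UNIV - {i0}. ?I i)"
    by (simp add: sum.remove)
  also have "?I i0 = M"
    by (simp add: M_def e_def power2_eq_square power_add mult_ac)
  also have "(\<Sum>i\<in>UNIV - {i0}. ?I i) = (\<Sum>i\<in>UNIV - {i0}. M / (2 * real j + 1))"
  proof (rule sum.cong)
    fix i
    assume "i \<in> UNIV - {i0}"
    then have "e \<bullet> axis i 1 = 0"
      by (simp add: e_def inner_axis_axis)
    then show "?I i = M / (2 * real j + 1)"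
      unfolding M_def by (intro integral_sphere_mixed_moment[OF inv]) (simp_all add: e_def)
  qed simp
  also have "M + \<dots> = M * (2 * real j + CARD('n)) / (2 * real j + 1)"
    by (simp add: card_Diff_singleton of_nat_diff field_simps)
  finally show ?thesis
    by (simp add: e_def M_def)
qed

fun sphere_moment :: "nat \<Rightarrow> nat \<Rightarrow> real" where
  "sphere_moment n 0 = 1"
| "sphere_moment n (Suc 0) = 0"
| "sphere_moment n (Suc (Suc k)) = sphere_moment n k * (real k + 1) / (real k + real n)"

lemma integral_sphere_axis_power:
  fixes i0 :: "'n::finite"
  assumes inv: "orthogonally_invariant (sphere_measure :: (real^'n) measure)"
  shows "(\<integral>y. (axis i0 1 \<bullet> y) ^ k \<partial>(sphere_measure :: (real^'n) measure)) = sphere_moment CARD('n) k"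
proof (induction "CARD('n)" k rule: sphere_moment.induct)
  case 1
  interpret prob_space "sphere_measure :: (real^'n) measure"
    by (rule prob_space_sphere_measure)
  show ?case
    using prob_space by simp
next
  case 2
  show ?case
    using integral_sphere_inner_power_odd[OF inv, of 1] by simp
next
  case (3 k)
  show ?case
  proof (cases "even k")
    case True
    then obtain j where k: "k = 2 * j"
      by blast
    have "real k + real CARD('n) \<noteq> 0"
      by (simp add: add_nonneg_eq_0_iff)
    then show ?thesis
      using integral_sphere_axis_power_step[OF inv, of i0 j] 3 k by (simp add: field_simps)
  next
    case False
    then have "sphere_moment CARD('n) k = 0"
      using 3 integral_sphere_inner_power_odd[OF inv] by simp
    then show ?thesis
      using integral_sphere_inner_power_odd[OF inv, of "Suc (Suc k)"] False by (simp del: power_Suc)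
  qed
qed

lemma integral_sphere_inner_power:
  fixes u :: "real^'n"
  assumes inv: "orthogonally_invariant (sphere_measure :: (real^'n) measure)" and "norm u = 1"
  shows "(\<integral>y. (u \<bullet> y) ^ k \<partial>sphere_measure) = sphere_moment CARD('n) k"
  using integral_sphere_inner_eq[OF inv, of u "axis undefined 1" "\<lambda>t. t ^ k"] assms(2)
    integral_sphere_axis_power[OF inv] by simp

section \<open>Polynomial functions on \<open>real^'n\<close>\<close>

definition vec_monomial :: "('n::finite \<Rightarrow> nat) \<Rightarrow> real^'n \<Rightarrow> real" where
  "vec_monomial a x = (\<Prod>i\<in>UNIV. (x $ i) ^ a i)"

lemma poly_fun_deg_le_iff:
  "poly_fun_deg_le d p \<longleftrightarrow>
     (\<exists>M c. finite M \<and> (\<forall>a\<in>M. (\<Sum>i\<in>UNIV. a i) \<le> d) \<and> (\<forall>x. p x = (\<Sum>a\<in>M. c a * vec_monomial a x)))"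
  unfolding poly_fun_deg_le_def vec_monomial_def ..

lemma vec_monomial_mult: "vec_monomial a x * vec_monomial b x = vec_monomial (\<lambda>i. a i + b i) x"
  by (simp add: vec_monomial_def prod.distrib[symmetric] power_add)

lemma poly_fun_deg_le_mono: "poly_fun_deg_le d p \<Longrightarrow> d \<le> d' \<Longrightarrow> poly_fun_deg_le d' p"
  unfolding poly_fun_deg_le_def by (blast intro: order_trans)

lemma poly_fun_deg_le_const: "poly_fun_deg_le d (\<lambda>_::real^'n. c)"
  unfolding poly_fun_deg_le_iff
  by (intro exI[of _ "{\<lambda>_. 0}"] exI[of _ "\<lambda>_. c"]) (simp add: vec_monomial_def)

lemma poly_fun_deg_le_add:
  fixes p q :: "real^'n \<Rightarrow> real"
  assumes "poly_fun_deg_le d p" "poly_fun_deg_le d q"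
  shows "poly_fun_deg_le d (\<lambda>x. p x + q x)"
proof -
  obtain M c where M: "finite M" "\<forall>a\<in>M. (\<Sum>i\<in>UNIV. a i) \<le> d" "\<forall>x. p x = (\<Sum>a\<in>M. c a * vec_monomial a x)"
    using assms(1) unfolding poly_fun_deg_le_iff by blast
  obtain N e where N: "finite N" "\<forall>a\<in>N. (\<Sum>i\<in>UNIV. a i) \<le> d" "\<forall>x. q x = (\<Sum>a\<in>N. e a * vec_monomial a x)"
    using assms(2) unfolding poly_fun_deg_le_iff by blast
  define c' where "c' a = (if a \<in> M then c a else 0) + (if a \<in> N then e a else 0)" for a
  have "p x + q x = (\<Sum>a\<in>M \<union> N. c' a * vec_monomial a x)" for x
  proof -
    have "p x + q x = (\<Sum>a\<in>M \<union> N. if a \<in> M then c a * vec_monomial a x else 0)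
        + (\<Sum>a\<in>M \<union> N. if a \<in> N then e a * vec_monomial a x else 0)"
      using M(1,3) N(1,3) by (simp add: sum.inter_restrict[symmetric] Int_absorb1)
    also have "\<dots> = (\<Sum>a\<in>M \<union> N. c' a * vec_monomial a x)"
      unfolding sum.distrib[symmetric] by (intro sum.cong) (simp_all add: c'_def distrib_right)
    finally show ?thesis .
  qed
  then show ?thesis
    unfolding poly_fun_deg_le_iff using M N by (intro exI[of _ "M \<union> N"] exI[of _ c']) auto
qed

lemma poly_fun_deg_le_mult:
  fixes p q :: "real^'n \<Rightarrow> real"
  assumes "poly_fun_deg_le d1 p" "poly_fun_deg_le d2 q"
  shows "poly_fun_deg_le (d1 + d2) (\<lambda>x. p x * q x)"
proof -
  obtain M c where M: "finite M" "\<forall>a\<in>M. (\<Sum>i\<in>UNIV. a i) \<le> d1" "\<forall>x. p x = (\<Sum>a\<in>M. c a * vec_monomial a x)"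
    using assms(1) unfolding poly_fun_deg_le_iff by blast
  obtain N e where N: "finite N" "\<forall>b\<in>N. (\<Sum>i\<in>UNIV. b i) \<le> d2" "\<forall>x. q x = (\<Sum>b\<in>N. e b * vec_monomial b x)"
    using assms(2) unfolding poly_fun_deg_le_iff by blast
  define h :: "('n \<Rightarrow> nat) \<times> ('n \<Rightarrow> nat) \<Rightarrow> ('n \<Rightarrow> nat)" where "h = (\<lambda>(a, b) i. a i + b i)"
  define c' where "c' m = (\<Sum>ab\<in>{ab \<in> M \<times> N. h ab = m}. c (fst ab) * e (snd ab))" for m
  have fin: "finite (M \<times> N)"
    using M(1) N(1) by simp
  have "p x * q x = (\<Sum>m\<in>h ` (M \<times> N). c' m * vec_monomial m x)" for x
  proof -
    have "p x * q x = (\<Sum>ab\<in>M \<times> N. c (fst ab) * e (snd ab) * vec_monomial (h ab) x)"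
      using M(3) N(3)
      by (simp add: sum_product sum.cartesian_product h_def vec_monomial_mult[symmetric] case_prod_beta mult_ac)
    also have "\<dots> = (\<Sum>m\<in>h ` (M \<times> N). \<Sum>ab\<in>{ab \<in> M \<times> N. h ab = m}. c (fst ab) * e (snd ab) * vec_monomial (h ab) x)"
      by (rule sum.image_gen[OF fin])
    also have "\<dots> = (\<Sum>m\<in>h ` (M \<times> N). c' m * vec_monomial m x)"
      unfolding c'_def by (intro sum.cong refl) (simp add: sum_distrib_right)
    finally show ?thesis .
  qed
  moreover have "\<forall>m\<in>h ` (M \<times> N). (\<Sum>i\<in>UNIV. m i) \<le> d1 + d2"
    using M(2) N(2) by (auto simp: h_def sum.distrib intro: add_mono)
  ultimately show ?thesis
    unfolding poly_fun_deg_le_iff using fin by blast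
qed

lemma poly_fun_deg_le_inner: "poly_fun_deg_le 1 (\<lambda>y::real^'n. u \<bullet> y)"
proof -
  define \<delta> where "\<delta> j = (\<lambda>i. if i = j then 1 else 0 :: nat)" for j :: 'n
  have inj: "inj \<delta>"
    unfolding \<delta>_def inj_def by (metis zero_neq_one)
  have "vec_monomial (\<delta> j) y = (\<Prod>i\<in>UNIV. if i = j then y $ i else 1)" for j y
    unfolding vec_monomial_def \<delta>_def by (rule prod.cong) auto
  then have "vec_monomial (\<delta> j) y = y $ j" for j y
    by simp
  then have "u \<bullet> y = (\<Sum>a\<in>range \<delta>. u $ inv \<delta> a * vec_monomial a y)" for y
    using inj by (simp add: sum.reindex inner_vec_def)
  moreover have "(\<Sum>i\<in>UNIV. \<delta> j i) = 1" for j
    by (simp add: \<delta>_def)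
  ultimately show ?thesis
    unfolding poly_fun_deg_le_iff by (intro exI[of _ "range \<delta>"] exI[of _ "\<lambda>a. u $ inv \<delta> a"]) auto
qed

lemma poly_fun_deg_le_poly_inner: "poly_fun_deg_le (degree p) (\<lambda>y::real^'n. poly p (u \<bullet> y))"
proof (induction p)
  case (pCons a p)
  show ?case
  proof (cases "p = 0")
    case False
    then have "poly_fun_deg_le (Suc (degree p)) (\<lambda>y. a + (u \<bullet> y) * poly p (u \<bullet> y))"
      using poly_fun_deg_le_mult[OF poly_fun_deg_le_inner pCons.IH]
      by (intro poly_fun_deg_le_add poly_fun_deg_le_const) simp
    then show ?thesis
      using False by simp
  qed (simp add: poly_fun_deg_le_const)
qed (simp add: poly_fun_deg_le_const)

section \<open>Spherical designs and the linear programming bound\<close>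

definition sphere_poly_mean :: "nat \<Rightarrow> real poly \<Rightarrow> real" where
  "sphere_poly_mean n p = (\<Sum>k\<le>degree p. coeff p k * sphere_moment n k)"

lemma integral_sphere_poly_inner:
  fixes u :: "real^'n"
  assumes inv: "orthogonally_invariant (sphere_measure :: (real^'n) measure)" and u: "norm u = 1"
  shows "(\<integral>y. poly p (u \<bullet> y) \<partial>sphere_measure) = sphere_poly_mean CARD('n) p"
proof -
  have "(\<integral>y. poly p (u \<bullet> y) \<partial>sphere_measure)
      = (\<Sum>k\<le>degree p. coeff p k * (\<integral>y. (u \<bullet> y) ^ k \<partial>sphere_measure))"
    using integrable_sphere_inner_power_mult[of u _ u 0]
    by (simp add: poly_altdef integral_sum integrable_mult_right)
  then show ?thesis
    by (simp add: sphere_poly_mean_def integral_sphere_inner_power[OF inv u])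
qed

lemma spherical_design_inner_self:
  assumes "spherical_design \<tau> C" and "x \<in> C"
  shows "x \<bullet> x = 1"
  using assms by (auto simp: spherical_design_def unit_sphere_def dot_square_norm)

lemma spherical_design_sum_poly_inner:
  fixes C :: "(real^'n) set"
  assumes inv: "orthogonally_invariant (sphere_measure :: (real^'n) measure)"
    and design: "spherical_design \<tau> C" and x: "x \<in> C" and deg: "degree p \<le> \<tau>"
  shows "(\<Sum>y\<in>C - {x}. poly p (x \<bullet> y)) = card C * sphere_poly_mean CARD('n) p - poly p 1"
proof -
  have C: "finite C" "C \<noteq> {}" and "norm x = 1"
    using design x by (auto simp: spherical_design_def unit_sphere_def)
  have "poly_fun_deg_le \<tau> (\<lambda>y. poly p (x \<bullet> y))"
    using poly_fun_deg_le_poly_inner deg by (rule poly_fun_deg_le_mono)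
  then have "(\<integral>y. poly p (x \<bullet> y) \<partial>sphere_measure) = (\<Sum>y\<in>C. poly p (x \<bullet> y)) / card C"
    using design by (simp add: spherical_design_def)
  then have "sphere_poly_mean CARD('n) p = (\<Sum>y\<in>C. poly p (x \<bullet> y)) / card C"
    using integral_sphere_poly_inner[OF inv \<open>norm x = 1\<close>] by simp
  then have "(\<Sum>y\<in>C. poly p (x \<bullet> y)) = card C * sphere_poly_mean CARD('n) p"
    using C by simp
  then show ?thesis
    using C x spherical_design_inner_self[OF design x] by (simp add: sum.remove)
qed

lemma spherical_design_lp_bound:
  fixes C :: "(real^'n) set"
  assumes inv: "orthogonally_invariant (sphere_measure :: (real^'n) measure)"
    and design: "spherical_design \<tau> C" and deg: "degree f \<le> \<tau>"
    and nonneg: "\<And>x y. x \<in> C \<Longrightarrow> y \<in> C \<Longrightarrow> x \<noteq> y \<Longrightarrow> 0 \<le> poly f (x \<bullet> y)"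
  shows "poly f 1 \<le> card C * sphere_poly_mean CARD('n) f"
proof -
  obtain x where x: "x \<in> C"
    using design by (auto simp: spherical_design_def)
  have "0 \<le> (\<Sum>y\<in>C - {x}. poly f (x \<bullet> y))"
    using nonneg x by (intro sum_nonneg) auto
  then show ?thesis
    using spherical_design_sum_poly_inner[OF inv design x deg] by simp
qed

lemma spherical_design_lp_bound_eq_imp_root:
  fixes C :: "(real^'n) set"
  assumes inv: "orthogonally_invariant (sphere_measure :: (real^'n) measure)"
    and design: "spherical_design \<tau> C" and deg: "degree f \<le> \<tau>"
    and nonneg: "\<And>x y. x \<in> C \<Longrightarrow> y \<in> C \<Longrightarrow> x \<noteq> y \<Longrightarrow> 0 \<le> poly f (x \<bullet> y)"
    and eq: "card C * sphere_poly_mean CARD('n) f = poly f 1"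
    and "x \<in> C" "y \<in> C" "x \<noteq> y"
  shows "poly f (x \<bullet> y) = 0"
proof -
  have "finite C"
    using design by (simp add: spherical_design_def)
  moreover have "(\<Sum>y\<in>C - {x}. poly f (x \<bullet> y)) = 0"
    using spherical_design_sum_poly_inner[OF inv design \<open>x \<in> C\<close> deg] eq by simp
  ultimately show ?thesis
    using nonneg assms(6-8) by (subst (asm) sum_nonneg_eq_0_iff) auto
qed

lemma dist_count_by_interpolation:
  fixes C :: "(real^'n) set"
  assumes inv: "orthogonally_invariant (sphere_measure :: (real^'n) measure)"
    and design: "spherical_design \<tau> C" and x: "x \<in> C" and deg: "degree L \<le> \<tau>"
    and Z: "\<And>y. y \<in> C \<Longrightarrow> y \<noteq> x \<Longrightarrow> x \<bullet> y \<in> Z"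
    and L_t: "poly L t = 1" and L_Z: "\<And>s. s \<in> Z \<Longrightarrow> s \<noteq> t \<Longrightarrow> poly L s = 0" and "t \<noteq> 1"
  shows "dist_count C x t = card C * sphere_poly_mean CARD('n) L - poly L 1"
proof -
  have "finite C"
    using design by (simp add: spherical_design_def)
  have "{y \<in> C. x \<bullet> y = t} = {y \<in> C - {x}. x \<bullet> y = t}"
    using spherical_design_inner_self[OF design x] \<open>t \<noteq> 1\<close> by auto
  then have "real (dist_count C x t) = (\<Sum>y\<in>C - {x}. if x \<bullet> y = t then 1 else 0)"
    using \<open>finite C\<close> by (simp add: dist_count_def sum.If_cases Int_def conj_commute)
  also have "\<dots> = (\<Sum>y\<in>C - {x}. poly L (x \<bullet> y))"
    using Z L_t L_Z by (intro sum.cong) auto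
  finally show ?thesis
    using spherical_design_sum_poly_inner[OF inv design x deg] by simp
qed

lemma dist_count_eq_0:
  assumes "\<And>y. y \<in> C \<Longrightarrow> y \<noteq> x \<Longrightarrow> x \<bullet> y \<in> Z" and "x \<bullet> x \<noteq> t" and "t \<notin> Z"
  shows "dist_count C x t = 0"
proof -
  have "{y \<in> C. x \<bullet> y = t} = {}"
    using assms by auto
  then show ?thesis
    unfolding dist_count_def by (simp only: card.empty)
qed

section \<open>Designs in dimension 48 avoiding inner products in \<open>(1/6, 1/3)\<close> up to sign\<close>

definition lp_certificate :: "real poly" where
  "lp_certificate =
     [:0, 0, 1/5184, 1/5184, -53/5184, -53/5184, 175/1296, 175/1296, -23/36, -23/36, 1, 1:]"

lemma poly_lp_certificate:
  "poly lp_certificate t = (t + 1) * t\<^sup>2 * ((t - 1/2) * (t + 1/2))\<^sup>2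
     * ((t - 1/3) * (t + 1/3) * ((t - 1/6) * (t + 1/6)))"
  by (simp add: lp_certificate_def power2_eq_square algebra_simps)

lemma lp_certificate_values:
  "degree lp_certificate = 11" "poly lp_certificate 1 = 35/36"
  "sphere_poly_mean 48 lp_certificate = 1/53913600"
  by (simp_all add: lp_certificate_def sphere_poly_mean_def eval_nat_numeral)

lemma lp_certificate_nonneg:
  assumes "-1 \<le> t" and "t \<notin> {-1/3<..<-1/6} \<union> {1/6<..<1/3}"
  shows "0 \<le> poly lp_certificate t"
proof -
  consider "t \<le> -1/3" | "-1/6 \<le> t" "t \<le> 1/6" | "1/3 \<le> t"
    using assms(2) by fastforce
  then have "0 \<le> (t - 1/3) * (t + 1/3) * ((t - 1/6) * (t + 1/6))"
  proof cases
    case 1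
    then have "0 \<le> (t - 1/3) * (t + 1/3)" "0 \<le> (t - 1/6) * (t + 1/6)"
      by (auto intro: mult_nonpos_nonpos)
    then show ?thesis
      by simp
  next
    case 2
    then have "(t - 1/3) * (t + 1/3) \<le> 0" "(t - 1/6) * (t + 1/6) \<le> 0"
      by (auto intro: mult_nonpos_nonneg)
    then show ?thesis
      by (simp add: mult_nonpos_nonpos)
  next
    case 3
    then show ?thesis
      by simp
  qed
  moreover have "0 \<le> (t + 1) * t\<^sup>2 * ((t - 1/2) * (t + 1/2))\<^sup>2"
    using assms(1) by simp
  ultimately show ?thesis
    unfolding poly_lp_certificate by (rule mult_nonneg_nonneg[rotated])
qed

definition admissible_inner_products :: "real set" where
  "admissible_inner_products = {-1, -1/2, -1/3, -1/6, 0, 1/6, 1/3, 1/2}"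

lemma lp_certificate_root:
  "poly lp_certificate t = 0 \<Longrightarrow> t \<in> admissible_inner_products"
  by (auto simp: poly_lp_certificate admissible_inner_products_def)

definition tight_distance_count :: "real \<Rightarrow> nat" where
  "tight_distance_count t =
     (if t = -1 then 1
      else if t = 1/2 \<or> t = -1/2 then 36848
      else if t = 1/3 \<or> t = -1/3 then 1678887
      else if t = 1/6 \<or> t = -1/6 then 12608784
      else if t = 0 then 23766960
      else 0)"

text \<open>The Lagrange basis polynomials of the eight admissible inner products; the last branch
  belongs to \<open>t = 0\<close>.\<close>
definition lagrange_certificate :: "real \<Rightarrow> real poly" where
  "lagrange_certificate t =
     (if t = -1 then [:0, 1/840, 0, -7/120, 0, 3/5, 0, -54/35:]
      else if t = 1/2 then [:0, 1/15, 1/5, -43/15, -9, 78/5, 324/5, 216/5:]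
      else if t = -1/2 then [:0, -1/5, 1/5, 47/5, -9, -414/5, 324/5, 648/5:]
      else if t = 1/3 then [:0, -27/40, -27/10, 999/40, 108, -81/5, -1944/5, -1458/5:]
      else if t = -1/3 then [:0, 27/20, -27/10, -1161/20, 108, 1782/5, -1944/5, -2916/5:]
      else if t = 1/6 then [:0, 27/7, 27, -27, -351, -162, 972, 5832/7:]
      else if t = -1/6 then [:0, -27/5, 27, 513/5, -351, -3078/5, 972, 5832/5:]
      else [:1, 1, -49, -49, 504, 504, -1296, -1296:])"

lemma lagrange_certificate_properties:
  assumes "t \<in> admissible_inner_products"
  shows "degree (lagrange_certificate t) \<le> 11"
    and "poly (lagrange_certificate t) t = 1"
    and "\<And>s. s \<in> admissible_inner_products \<Longrightarrow> s \<noteq> t \<Longrightarrow> poly (lagrange_certificate t) s = 0"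
    and "52416000 * sphere_poly_mean 48 (lagrange_certificate t) - poly (lagrange_certificate t) 1
           = tight_distance_count t"
  using assms unfolding admissible_inner_products_def
  (* the counts must become real numerals before eval_nat_numeral unfolds natural numerals *)
  by (elim insertE emptyE; hypsubst; simp add: lagrange_certificate_def tight_distance_count_def;
      simp add: sphere_poly_mean_def eval_nat_numeral)+

lemma tight_design_dist_count:
  fixes C :: "(real^'n) set"
  assumes inv: "orthogonally_invariant (sphere_measure :: (real^'n) measure)"
    and n: "CARD('n) = 48" and design: "spherical_design 11 C" and card: "card C = 52416000"
    and x: "x \<in> C" and Z: "\<And>y. y \<in> C \<Longrightarrow> y \<noteq> x \<Longrightarrow> x \<bullet> y \<in> admissible_inner_products"
    and "t < 1"
  shows "dist_count C x t = tight_distance_count t"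
proof (cases "t \<in> admissible_inner_products")
  case True
  have "real (dist_count C x t)
      = card C * sphere_poly_mean CARD('n) (lagrange_certificate t) - poly (lagrange_certificate t) 1"
    using \<open>t < 1\<close> lagrange_certificate_properties[OF True]
    by (intro dist_count_by_interpolation[OF inv design x _ Z]) auto
  then show ?thesis
    using lagrange_certificate_properties(4)[OF True] n card by simp
next
  case False
  then show ?thesis
    using dist_count_eq_0[OF Z] spherical_design_inner_self[OF design x] \<open>t < 1\<close>
    by (auto simp: tight_distance_count_def admissible_inner_products_def)
qed

theorem theorem6:
  fixes C :: "(real ^ 'n) set"
  assumes "CARD('n) = 48"
    and "spherical_design 11 C"
    and "inner_products C \<subseteq> {-1..<1} - ({-1/3<..<-1/6} \<union> {1/6<..<1/3})"
  shows "card C \<ge> 52416000 \<and>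
    (card C = 52416000 \<longrightarrow>
      distance_invariant C \<and>
      (\<forall>x\<in>C. \<forall>t. -1 \<le> t \<and> t < 1 \<longrightarrow>
         dist_count C x t =
           (if t = -1 then 1
            else if t = 1/2 \<or> t = -1/2 then 36848
            else if t = 1/3 \<or> t = -1/3 then 1678887
            else if t = 1/6 \<or> t = -1/6 then 12608784
            else if t = 0 then 23766960
            else 0)))"
proof -
  note n = assms(1) and design = assms(2)
  have inv: "orthogonally_invariant (sphere_measure :: (real^'n) measure)"
    using n by (intro orthogonally_invariant_sphere_measure orthogonally_invariant_lborel[where 'm=48]) simp
  have nonneg: "0 \<le> poly lp_certificate (x \<bullet> y)" if "x \<in> C" "y \<in> C" "x \<noteq> y" for x y
  proof -
    have "x \<bullet> y \<in> {-1..<1} - ({-1/3<..<-1/6} \<union> {1/6<..<1/3})"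
      using assms(3) that unfolding inner_products_def by blast
    then show ?thesis
      by (intro lp_certificate_nonneg) auto
  qed
  have deg: "degree lp_certificate \<le> 11"
    by (simp add: lp_certificate_values)
  have "35/36 \<le> card C * (1/53913600)"
    using spherical_design_lp_bound[OF inv design deg nonneg] n by (simp add: lp_certificate_values)
  moreover have "card C = 52416000 \<Longrightarrow> x \<in> C \<Longrightarrow> t < 1
      \<Longrightarrow> dist_count C x t = tight_distance_count t" for x t
    using spherical_design_lp_bound_eq_imp_root[OF inv design deg nonneg] n
    by (intro tight_design_dist_count[OF inv n design]) (auto intro: lp_certificate_root simp: lp_certificate_values)
  ultimately show ?thesis
    unfolding distance_invariant_def tight_distance_count_def[symmetric] by auto
qed

end
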